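(* The relation $\preceq_{d+1}$ is a partial order on the set of simplices on $\gamma_d$.
   Context: $\gamma_d=\{(t,t^2,\dots,t^d):t\in\mathbb{R}\}$. A simplex on $\gamma_d$ is a finite subset $\sigma\subseteq\gamma_d$ with $|\sigma|\le d+1$, identified with $\mathrm{conv}(\sigma)$. Simplices overlap in $\mathbb{R}^d$ if $\mathrm{conv}(\sigma)\cap\mathrm{conv}(\tau)\supsetneq\mathrm{conv}(\sigma\cap\tau)$. For $\sigma=\{\gamma_d(t_1),\dots,\gamma_d(t_k)\}$ the lifting is $\hat\sigma=\{\gamma_{d+1}(t_i)\}$ and the height function $h_\sigma:\mathrm{conv}(\sigma)\to\mathbb{R}$ assigns to $p$ the last coordinate of the point of $\mathrm{conv}(\hat\sigma)$ projecting to $p$. Write $\sigma<_{d+1}\tau$ if $\sigma,\tau$ overlap in $\mathbb{R}^d$ and $h_\sigma\le h_\tau$ on $\mathrm{conv}(\sigma)\cap\mathrm{conv}(\tau)$. Define $\sigma\preceq_{d+1}\tau$ if $\sigma=\tau$ or there exist $k\ge1$ and simplices $\sigma=\sigma_0<_{d+1}\sigma_1<_{d+1}\dots<_{d+1}\sigma_k=\tau$ on $\gamma_d$. *)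

theory Defs
  imports Main "HOL-Analysis.Analysis"
begin

text \<open>Points of R^d are encoded as functions nat => real whose coordinates
  1..d are the Euclidean coordinates (all other coordinates are 0).\<close>

definition gamma :: "nat \<Rightarrow> real \<Rightarrow> (nat \<Rightarrow> real)" where
  "gamma d t = (\<lambda>i. if 1 \<le> i \<and> i \<le> d then t ^ i else 0)"

definition conv :: "(nat \<Rightarrow> real) set \<Rightarrow> (nat \<Rightarrow> real) set" where
  "conv S = {p. \<exists>u. (\<forall>x\<in>S. 0 \<le> u x) \<and> (\<Sum>x\<in>S. u x) = 1 \<and>
                     p = (\<lambda>i. \<Sum>x\<in>S. u x * x i)}"

definition simplices :: "nat \<Rightarrow> (nat \<Rightarrow> real) set set" where
  "simplices d = {\<sigma>. finite \<sigma> \<and> \<sigma> \<subseteq> range (gamma d) \<and> card \<sigma> \<le> d + 1}"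

definition overlap :: "(nat \<Rightarrow> real) set \<Rightarrow> (nat \<Rightarrow> real) set \<Rightarrow> bool" where
  "overlap \<sigma> \<tau> \<longleftrightarrow> conv (\<sigma> \<inter> \<tau>) \<subset> conv \<sigma> \<inter> conv \<tau>"

definition lift :: "nat \<Rightarrow> (nat \<Rightarrow> real) \<Rightarrow> (nat \<Rightarrow> real)" where
  "lift d p = gamma (d + 1) (THE t. p = gamma d t)"

definition proj :: "nat \<Rightarrow> (nat \<Rightarrow> real) \<Rightarrow> (nat \<Rightarrow> real)" where
  "proj d q = (\<lambda>i. if i \<le> d then q i else 0)"

definition height :: "nat \<Rightarrow> (nat \<Rightarrow> real) set \<Rightarrow> (nat \<Rightarrow> real) \<Rightarrow> real" where
  "height d \<sigma> p = (THE y. \<exists>q\<in>conv (lift d ` \<sigma>). proj d q = p \<and> q (d + 1) = y)"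

definition below :: "nat \<Rightarrow> (nat \<Rightarrow> real) set \<Rightarrow> (nat \<Rightarrow> real) set \<Rightarrow> bool" where
  "below d \<sigma> \<tau> \<longleftrightarrow> overlap \<sigma> \<tau> \<and>
     (\<forall>p\<in>conv \<sigma> \<inter> conv \<tau>. height d \<sigma> p \<le> height d \<tau> p)"

definition preceq :: "nat \<Rightarrow> (nat \<Rightarrow> real) set \<Rightarrow> (nat \<Rightarrow> real) set \<Rightarrow> bool" where
  "preceq d \<sigma> \<tau> \<longleftrightarrow> \<sigma> = \<tau> \<or>
     tranclp (\<lambda>a b. a \<in> simplices d \<and> b \<in> simplices d \<and> below d a b) \<sigma> \<tau>"

end

theory Submission
  imports Defs "HOL-Computational_Algebra.Polynomial"
begin

text \<open>A simplex on \<open>\<gamma>\<^sub>d\<close> is given by a set \<open>S\<close> of at most \<open>d + 1\<close> parameters; a point of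
  its hull is a convex combination \<open>u\<close> of \<open>S\<close>, its coordinates are the moments
  \<open>\<Sum>s\<in>S. u s * s ^ k\<close> for \<open>1 \<le> k \<le> d\<close>, and its height is the moment of order \<open>d + 1\<close>.
  If \<open>below d \<sigma> \<tau>\<close> with parameter sets \<open>S\<close> and \<open>R\<close>, two representations of a point of
  the overlap differ by a nonzero signed measure on \<open>S \<union> R\<close>, negative only on \<open>S\<close> and
  positive only on \<open>R\<close>, whose moments up to order \<open>d\<close> vanish; the height condition says
  that every such measure has a nonnegative moment of order \<open>d + 1\<close>.

  A measure orthogonal to the polynomials of degree \<open>\<le> d\<close> changes sign at least \<open>d + 1\<close>
  times, since otherwise some such polynomial would have its sign on the whole support.
  Conversely, \<open>d + 2\<close> reals \<open>Z\<close> carry the divided-difference measure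
  \<open>z \<mapsto> 1 / (\<Prod>w\<in>Z - {z}. z - w)\<close>, which has alternating signs, vanishing moments up to
  order \<open>d\<close> and moment \<open>1\<close> of order \<open>d + 1\<close>. Let \<open>x\<close> be the largest point in which \<open>S\<close>
  and \<open>R\<close> differ. Unless the number of common points above \<open>x\<close> has the right parity, these
  points, \<open>x\<close> and the sign changes of the measure below \<open>x\<close> form \<open>d + 2\<close> points whose
  divided-difference measure, negated, contradicts the height condition. Hence the sign
  vector \<open>x \<mapsto> (-1) ^ card {y\<in>S. x < y}\<close> strictly increases along \<open>below d\<close> in the
  lexicographic order read from the right, so chains of \<open>below d\<close> cannot close up.\<close>

section \<open>Divided differences\<close>

definition circuit_weight :: "real set \<Rightarrow> real \<Rightarrow> real" where
  "circuit_weight Z z = 1 / (\<Prod>w\<in>Z - {z}. z - w)"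

lemma circuit_weight_poly:
  fixes p :: "real poly"
  assumes fin: "finite Z" and card: "card Z = Suc n" and deg: "degree p \<le> n"
  shows "(\<Sum>z\<in>Z. circuit_weight Z z * poly p z) = coeff p n"
proof -
  define L where "L z = (\<Prod>w\<in>Z - {z}. [:-w, 1:])" for z
  define q where "q = (\<Sum>z\<in>Z. smult (circuit_weight Z z * poly p z) (L z))"
  have poly_L: "poly (L z) x = (\<Prod>w\<in>Z - {z}. x - w)" for z x
    unfolding L_def by (simp add: poly_prod)
  have degree_L: "degree (L z) = n" and coeff_L: "coeff (L z) n = 1" if "z \<in> Z" for z
  proof -
    have "degree (L z) = (\<Sum>w\<in>Z - {z}. degree [:-w, 1::real:])"
      unfolding L_def by (rule degree_prod_eq_sum_degree) auto
    then show deg_z: "degree (L z) = n" using card that fin by simp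
    have "lead_coeff (L z) = (\<Prod>w\<in>Z - {z}. lead_coeff [:-w, 1::real:])"
      unfolding L_def by (rule lead_coeff_prod)
    then show "coeff (L z) n = 1" using deg_z by simp
  qed
  have "degree q \<le> n"
    unfolding q_def
    by (rule degree_sum_le[OF fin]) (use degree_L degree_smult_le order_trans in metis)
  moreover have "poly q x = poly p x" if "x \<in> Z" for x
  proof -
    have "poly (L z) x = 0" if "z \<in> Z - {x}" for z
      unfolding poly_L using fin that \<open>x \<in> Z\<close> by (subst prod_zero_iff) auto
    then have "poly q x = circuit_weight Z x * poly p x * poly (L x) x"
      unfolding q_def poly_sum using fin that by (simp add: sum.remove)
    moreover have "(\<Prod>w\<in>Z - {x}. x - w) \<noteq> 0"
      using fin by (subst prod_zero_iff) auto
    ultimately show ?thesis by (simp add: poly_L circuit_weight_def)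
  qed
  ultimately have "p = q"
    using card deg by (intro poly_eqI_degree[of Z]) auto
  then have "coeff p n = coeff q n"
    by simp
  also have "\<dots> = (\<Sum>z\<in>Z. circuit_weight Z z * poly p z * coeff (L z) n)"
    unfolding q_def by (simp add: coeff_sum)
  finally show ?thesis
    by (simp add: coeff_L)
qed

lemma circuit_weight_moment:
  assumes "finite Z" and "card Z = Suc n" and "k \<le> n"
  shows "(\<Sum>z\<in>Z. circuit_weight Z z * z ^ k) = (if k = n then 1 else 0)"
  using circuit_weight_poly[OF assms(1,2), of "monom 1 k"] assms(3)
  by (simp add: poly_monom coeff_monom degree_monom_eq)

lemma circuit_weight_sign:
  assumes fin: "finite Z" and "z \<in> Z"
  shows "0 < (-1) ^ card {w\<in>Z. z < w} * circuit_weight Z z"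
proof -
  define A where "A = {w\<in>Z. z < w}"
  define B where "B = {w\<in>Z. w < z}"
  have "Z - {z} = A \<union> B" "A \<inter> B = {}" "finite A" "finite B"
    using fin unfolding A_def B_def by auto
  then have "(\<Prod>w\<in>Z - {z}. z - w) = (\<Prod>w\<in>A. -1 * (w - z)) * (\<Prod>w\<in>B. z - w)"
    by (simp add: prod.union_disjoint)
  also have "\<dots> = (-1) ^ card A * ((\<Prod>w\<in>A. w - z) * (\<Prod>w\<in>B. z - w))"
    by (subst prod.distrib) simp
  finally have "(-1) ^ card A * (\<Prod>w\<in>Z - {z}. z - w) = (\<Prod>w\<in>A. w - z) * (\<Prod>w\<in>B. z - w)"
    by (simp add: power_mult_distrib[symmetric] flip: mult.assoc)
  also have "\<dots> > 0"
    by (intro mult_pos_pos prod_pos) (auto simp: A_def B_def)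
  finally show ?thesis
    unfolding circuit_weight_def A_def[symmetric]
    by (simp add: zero_less_mult_iff zero_less_divide_iff)
qed

section \<open>Sign changes of measures orthogonal to low-degree polynomials\<close>

definition alternating_chain :: "(real \<Rightarrow> real) \<Rightarrow> real set \<Rightarrow> (nat \<Rightarrow> real) \<Rightarrow> nat \<Rightarrow> bool" where
  "alternating_chain \<mu> V c n \<longleftrightarrow> (\<forall>i<n. c i \<in> V) \<and>
     (\<forall>i. Suc i < n \<longrightarrow> c (Suc i) < c i \<and> \<mu> (c i) * \<mu> (c (Suc i)) < 0)"

lemma alternating_chain_decreasing:
  assumes "alternating_chain \<mu> V c n" and "i < j" and "j < n"
  shows "c j < c i"
  using assms(2,3)
proof (induction j)
  case (Suc j)
  then have "c (Suc j) < c j"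
    using assms(1) unfolding alternating_chain_def by blast
  then show ?case
    using Suc by (cases "i = j") auto
qed simp

lemma alternating_chain_inj:
  assumes "alternating_chain \<mu> V c n"
  shows "inj_on c {..<n}"
  by (rule linorder_inj_onI')
    (use alternating_chain_decreasing[OF assms] in \<open>fastforce\<close>)

lemma alternating_chain_length_le:
  assumes "alternating_chain \<mu> V c n" and "c ` {..<n} \<subseteq> A" and "finite A"
  shows "n \<le> card A"
  using card_mono[OF assms(3,2)] alternating_chain_inj[OF assms(1)]
  by (simp add: card_image)

lemma alternating_chain_segment:
  assumes "alternating_chain \<mu> V c N" and "j + n \<le> N"
  shows "alternating_chain \<mu> V (\<lambda>i. c (j + i)) n"
  unfolding alternating_chain_def
proof (rule conjI; intro allI impI)
  fix i
  assume "Suc i < n"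
  then have "Suc (j + i) < N"
    using assms(2) by simp
  then show "c (j + Suc i) < c (j + i) \<and> \<mu> (c (j + i)) * \<mu> (c (j + Suc i)) < 0"
    using assms(1) unfolding alternating_chain_def by simp
qed (use assms in \<open>auto simp: alternating_chain_def\<close>)

lemma alternating_chain_Cons:
  assumes "alternating_chain \<mu> W c n" and "W \<subseteq> V" and "0 < n" and "a \<in> V"
    and "c 0 < a" and "\<mu> a * \<mu> (c 0) < 0"
  shows "alternating_chain \<mu> V (\<lambda>i. if i = 0 then a else c (i - 1)) (Suc n)"
  using assms unfolding alternating_chain_def
  by (auto simp: less_Suc_eq_0_disj) (metis Suc_pred)+

lemma alternating_chain_sign:
  assumes "alternating_chain \<mu> V c n" and "i < n" and "\<mu> (c 0) * e < 0"
  shows "(-1) ^ i * \<mu> (c i) * e < 0"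
  using assms(2)
proof (induction i)
  case (Suc i)
  then have "\<mu> (c i) * \<mu> (c (Suc i)) < 0"
    using assms(1) unfolding alternating_chain_def by blast
  with Suc show ?case
    by (auto simp: zero_less_mult_iff mult_less_0_iff)
qed (use assms(3) in simp)

lemma alternating_chain_first_below:
  assumes chain: "alternating_chain \<mu> V c N" and A: "finite A" "\<forall>y\<in>V. x < y \<longrightarrow> y \<in> A"
    and "card A < N"
  obtains k where "k \<le> card A" and "k < N" and "c k \<le> x"
proof -
  have "\<exists>i<N. c i \<le> x"
  proof (rule ccontr)
    assume "\<not> (\<exists>i<N. c i \<le> x)"
    then have "c ` {..<N} \<subseteq> A"
      using chain A(2) unfolding alternating_chain_def by force
    then show False
      using alternating_chain_length_le[OF chain _ A(1)] \<open>card A < N\<close> by simp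
  qed
  define k where "k = (LEAST i. i < N \<and> c i \<le> x)"
  have k: "k < N" "c k \<le> x"
    using LeastI_ex[OF \<open>\<exists>i<N. c i \<le> x\<close>] unfolding k_def by auto
  have "x < c i" if "i < k" for i
    using not_less_Least[of i "\<lambda>i. i < N \<and> c i \<le> x"] that k(1) unfolding k_def by auto
  then have "c ` {..<k} \<subseteq> A"
    using chain A(2) k(1) unfolding alternating_chain_def by force
  then have "k \<le> card A"
    using alternating_chain_length_le[OF alternating_chain_segment[OF chain, of 0 k] _ A(1)] k(1)
    by simp
  with k show thesis
    using that by blast
qed

lemma alternating_chain_below:
  assumes chain: "alternating_chain \<mu> V c N" and A: "finite A" "\<forall>y\<in>V. x < y \<longrightarrow> y \<in> A"
    and N: "card A + 2 \<le> N" and e: "e \<noteq> 0" "x \<in> V \<Longrightarrow> 0 < \<mu> x * e"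
  shows "\<exists>L. alternating_chain \<mu> {y\<in>V. y < x} L (N - card A - 1) \<and> \<mu> (L 0) * e < 0"
proof -
  obtain k where "k \<le> card A" and k: "k < N" "c k \<le> x"
    using alternating_chain_first_below[OF chain A] N by auto
  then have step: "c (Suc k) < c k" "\<mu> (c k) * \<mu> (c (Suc k)) < 0"
    using chain N unfolding alternating_chain_def by auto
  define j where "j = (if c k < x \<and> \<mu> (c k) * e < 0 then k else Suc k)"
  define L where "L i = c (j + i)" for i
  have "j + (N - card A - 1) \<le> N"
    using \<open>k \<le> card A\<close> N unfolding j_def by auto
  then have L_chain: "alternating_chain \<mu> V L (N - card A - 1)"
    unfolding L_def by (rule alternating_chain_segment[OF chain])
  have L0: "L 0 < x \<and> \<mu> (L 0) * e < 0"
  proof (cases "c k < x \<and> \<mu> (c k) * e < 0")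
    case True
    then show ?thesis
      unfolding L_def j_def by simp
  next
    case False
    have "0 < \<mu> (c k) * e"
    proof (cases "c k = x")
      case True
      then show ?thesis
        using e(2) chain k(1) unfolding alternating_chain_def by auto
    next
      case False
      then show ?thesis
        using \<open>\<not> (c k < x \<and> \<mu> (c k) * e < 0)\<close> k(2) step(2) e(1)
        by (auto simp: not_less zero_less_mult_iff mult_less_0_iff order.order_iff_strict)
    qed
    then show ?thesis
      using False step k(2) unfolding L_def j_def
      by (auto simp: zero_less_mult_iff mult_less_0_iff)
  qed
  have "L i < x" if "i < N - card A - 1" for i
    using alternating_chain_decreasing[OF L_chain, of 0 i] that L0 by (cases "i = 0") auto
  then have "alternating_chain \<mu> {y\<in>V. y < x} L (N - card A - 1)"
    using L_chain unfolding alternating_chain_def by auto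
  with L0 show ?thesis
    by blast
qed

lemma sign_poly_step:
  fixes P0 :: "real poly"
  assumes fin: "finite V" and a: "a \<in> V" "b < a" "\<mu> b * \<mu> a < 0"
    and above: "\<forall>x\<in>V. b < x \<longrightarrow> 0 < \<mu> x * \<mu> a"
    and P0: "\<forall>x\<in>V. x \<le> b \<longrightarrow> 0 < poly P0 x * \<mu> x" "\<forall>x\<ge>b. 0 < poly P0 x * \<mu> b"
  shows "\<exists>P. degree P \<le> Suc (degree P0) \<and> (\<forall>x\<in>V. 0 < poly P x * \<mu> x) \<and>
           (\<forall>x\<ge>a. 0 < poly P x * \<mu> a)"
proof -
  define m where "m = Min {x\<in>V. b < x}"
  have "m \<in> {x\<in>V. b < x}"
    unfolding m_def using fin a by (intro Min_in) auto
  moreover have "\<forall>x\<in>V. b < x \<longrightarrow> m \<le> x"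
    unfolding m_def using fin by simp
  ultimately have m: "b < m" "m \<le> a" "\<forall>x\<in>V. b < x \<longrightarrow> m \<le> x"
    using a by auto
  define c0 where "c0 = (b + m) / 2"
  have c0: "b < c0" "\<forall>x\<in>V. b < x \<longrightarrow> c0 < x" "c0 < a"
    using m unfolding c0_def by force+
  define P where "P = [:c0, -1:] * P0"
  have poly_P: "poly P x = (c0 - x) * poly P0 x" for x
    unfolding P_def by (simp add: algebra_simps)
  have P0_above: "poly P0 x * \<mu> a < 0" if "b \<le> x" for x
    using P0(2) that a(3) by (fastforce simp: zero_less_mult_iff mult_less_0_iff)
  have "degree P \<le> Suc (degree P0)"
    unfolding P_def using degree_mult_le[of "[:c0, -1:]" P0] by simp
  moreover have "0 < poly P x * \<mu> x" if "x \<in> V" for x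
  proof (cases "x \<le> b")
    case True
    then show ?thesis
      using P0(1) that c0(1) by (simp add: poly_P mult.assoc)
  next
    case False
    then have "c0 - x < 0" and "0 < \<mu> x * \<mu> a" and "poly P0 x * \<mu> a < 0"
      using c0(2) above P0_above that by auto
    then show ?thesis
      unfolding poly_P by (auto simp: zero_less_mult_iff mult_less_0_iff)
  qed
  moreover have "0 < poly P x * \<mu> a" if "a \<le> x" for x
    using P0_above[of x] c0 that by (simp add: poly_P mult.assoc mult_neg_neg)
  ultimately show ?thesis
    by blast
qed

lemma last_sign_change:
  fixes \<mu> :: "real \<Rightarrow> real"
  assumes fin: "finite V" and nz: "\<forall>x\<in>V. \<mu> x \<noteq> 0" and change: "\<exists>x\<in>V. \<mu> x * \<mu> (Max V) < 0"
  obtains b where "b \<in> V" "b < Max V" "\<mu> b * \<mu> (Max V) < 0"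
    "\<forall>x\<in>V. b < x \<longrightarrow> 0 < \<mu> x * \<mu> (Max V)"
proof -
  define T where "T = {x\<in>V. \<mu> x * \<mu> (Max V) < 0}"
  have "finite T" "T \<noteq> {}"
    using fin change unfolding T_def by auto
  then have b: "Max T \<in> V" "\<mu> (Max T) * \<mu> (Max V) < 0"
    using Max_in[of T] unfolding T_def by auto
  have "V \<noteq> {}"
    using change by blast
  then have "Max T \<le> Max V" and "Max T \<noteq> Max V"
    using fin b by (auto simp: mult_less_0_iff)
  moreover have "0 < \<mu> x * \<mu> (Max V)" if "x \<in> V" "Max T < x" for x
  proof -
    have "x \<notin> T"
      using that \<open>finite T\<close> by (auto dest: Max_ge)
    moreover have "\<mu> (Max V) \<noteq> 0"
      using b by auto
    ultimately show ?thesis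
      using nz that unfolding T_def by (auto simp: not_less order.order_iff_strict)
  qed
  ultimately show thesis
    using that b by simp
qed

lemma same_sign_poly:
  fixes \<mu> :: "real \<Rightarrow> real"
  assumes "finite V" and "V \<noteq> {}" and nz: "\<forall>x\<in>V. \<mu> x \<noteq> 0"
    and same: "\<not> (\<exists>x\<in>V. \<mu> x * \<mu> (Max V) < 0)"
  shows "\<exists>P. degree P \<le> k \<and> (\<forall>x\<in>V. 0 < poly P x * \<mu> x) \<and>
           (\<forall>x\<ge>Max V. 0 < poly P x * \<mu> (Max V))"
proof -
  have "Max V \<in> V"
    using assms(1,2) by simp
  then have "0 < \<mu> x * \<mu> (Max V)" if "x \<in> V" for x
    using nz same that by (metis linorder_neqE_linordered_idom mult_eq_0_iff)
  moreover have "0 < sgn (\<mu> (Max V)) * \<mu> x" if "0 < \<mu> x * \<mu> (Max V)" for x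
    using that by (auto simp: sgn_real_def zero_less_mult_iff)
  ultimately show ?thesis
    using nz \<open>Max V \<in> V\<close>
    by (intro exI[of _ "[:sgn (\<mu> (Max V)):]"]) (auto simp: sgn_real_def)
qed

lemma no_alternating_chain_below_sign_change:
  assumes none: "\<nexists>c. alternating_chain \<mu> V c (Suc n) \<and> c 0 = Max V"
    and "finite V" and "0 < n" and "b < Max V" and "\<mu> b * \<mu> (Max V) < 0"
  shows "\<nexists>c. alternating_chain \<mu> {x\<in>V. x \<le> b} c n \<and> c 0 = b"
proof
  assume "\<exists>c. alternating_chain \<mu> {x\<in>V. x \<le> b} c n \<and> c 0 = b"
  then obtain c where c: "alternating_chain \<mu> {x\<in>V. x \<le> b} c n" "c 0 = b"
    by blast
  then have "V \<noteq> {}"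
    using \<open>0 < n\<close> unfolding alternating_chain_def by auto
  then have "alternating_chain \<mu> V (\<lambda>i. if i = 0 then Max V else c (i - 1)) (Suc n)"
    using assms(2-5) c(2) by (intro alternating_chain_Cons[OF c(1)]) (auto simp: mult.commute)
  then show False
    using none by force
qed

lemma sign_interpolating_poly:
  fixes \<mu> :: "real \<Rightarrow> real"
  assumes "finite V" and "V \<noteq> {}" and "\<forall>x\<in>V. \<mu> x \<noteq> 0"
    and "\<nexists>c. alternating_chain \<mu> V c (k + 2) \<and> c 0 = Max V"
  shows "\<exists>P. degree P \<le> k \<and> (\<forall>x\<in>V. 0 < poly P x * \<mu> x) \<and>
           (\<forall>x\<ge>Max V. 0 < poly P x * \<mu> (Max V))"
  using assms
proof (induction k arbitrary: V)
  case (0 V)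
  show ?case
  proof (cases "\<exists>x\<in>V. \<mu> x * \<mu> (Max V) < 0")
    case True
    then obtain b where "b \<in> V" "b < Max V" "\<mu> b * \<mu> (Max V) < 0"
      using last_sign_change[OF "0.prems"(1,3) True] by blast
    moreover have "alternating_chain \<mu> {x\<in>V. x \<le> b} (\<lambda>_. b) 1"
      using \<open>b \<in> V\<close> by (simp add: alternating_chain_def)
    ultimately show ?thesis
      using no_alternating_chain_below_sign_change[of \<mu> V 1 b] "0.prems"(1,4) by auto
  next
    case False
    then show ?thesis
      using same_sign_poly[OF "0.prems"(1-3)] by blast
  qed
next
  case (Suc k V)
  show ?case
  proof (cases "\<exists>x\<in>V. \<mu> x * \<mu> (Max V) < 0")
    case True
    then obtain b where b: "b \<in> V" "b < Max V" "\<mu> b * \<mu> (Max V) < 0"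
      "\<forall>x\<in>V. b < x \<longrightarrow> 0 < \<mu> x * \<mu> (Max V)"
      using last_sign_change[OF Suc.prems(1,3) True] by blast
    define W where "W = {x\<in>V. x \<le> b}"
    have W: "finite W" "W \<noteq> {}" "Max W = b"
      using Suc.prems(1) b(1) unfolding W_def by (auto intro: Max_eqI)
    have "\<nexists>c. alternating_chain \<mu> W c (k + 2) \<and> c 0 = Max W"
      using no_alternating_chain_below_sign_change[of \<mu> V "k + 2" b] Suc.prems(1,4) b(2,3)
      unfolding W_def W(3)[unfolded W_def] by simp
    then obtain P0 where P0: "degree P0 \<le> k" "\<forall>x\<in>W. 0 < poly P0 x * \<mu> x"
      "\<forall>x\<ge>b. 0 < poly P0 x * \<mu> b"
      using Suc.IH[OF W(1,2)] Suc.prems(3) W(3) unfolding W_def by force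
    have "Max V \<in> V"
      using Suc.prems(1,2) by simp
    with P0 b obtain P where "degree P \<le> Suc (degree P0)" "\<forall>x\<in>V. 0 < poly P x * \<mu> x"
      "\<forall>x\<ge>Max V. 0 < poly P x * \<mu> (Max V)"
      using sign_poly_step[OF Suc.prems(1), of "Max V" b \<mu> P0] unfolding W_def by blast
    with P0(1) show ?thesis
      by (intro exI[of _ P]) auto
  next
    case False
    then show ?thesis
      using same_sign_poly[OF Suc.prems(1-3)] by blast
  qed
qed

lemma moments_vanish_imp_alternating_chain:
  fixes \<mu> :: "real \<Rightarrow> real"
  assumes fin: "finite V" and "V \<noteq> {}" and "\<forall>x\<in>V. \<mu> x \<noteq> 0"
    and moments: "\<forall>k\<le>d. (\<Sum>x\<in>V. \<mu> x * x ^ k) = 0"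
  shows "\<exists>c. alternating_chain \<mu> V c (d + 2)"
proof (rule ccontr)
  assume "\<nexists>c. alternating_chain \<mu> V c (d + 2)"
  then obtain P where P: "degree P \<le> d" "\<forall>x\<in>V. 0 < poly P x * \<mu> x"
    using sign_interpolating_poly[OF assms(1-3), of d] by blast
  have "(\<Sum>x\<in>V. poly P x * \<mu> x) = (\<Sum>x\<in>V. \<Sum>i\<le>degree P. coeff P i * (\<mu> x * x ^ i))"
    unfolding poly_altdef sum_distrib_right by (simp add: mult_ac)
  also have "\<dots> = (\<Sum>i\<le>degree P. coeff P i * (\<Sum>x\<in>V. \<mu> x * x ^ i))"
    by (subst sum.swap) (simp add: sum_distrib_left)
  also have "\<dots> = 0"
    using moments P(1) by (intro sum.neutral) auto
  finally show False
    using sum_pos[OF fin \<open>V \<noteq> {}\<close>, of "\<lambda>x. poly P x * \<mu> x"] P(2) by simp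
qed

lemma moments_vanish_imp_zero:
  fixes f :: "real \<Rightarrow> real"
  assumes fin: "finite S" and card: "card S \<le> Suc d"
    and moments: "\<forall>k\<le>d. (\<Sum>s\<in>S. f s * s ^ k) = 0"
  shows "\<forall>s\<in>S. f s = 0"
proof (rule ccontr)
  assume "\<not> (\<forall>s\<in>S. f s = 0)"
  define V where "V = {s\<in>S. f s \<noteq> 0}"
  have V: "finite V" "V \<noteq> {}" "V \<subseteq> S"
    using fin \<open>\<not> (\<forall>s\<in>S. f s = 0)\<close> unfolding V_def by auto
  have "(\<Sum>x\<in>V. f x * x ^ k) = (\<Sum>x\<in>S. f x * x ^ k)" for k
    by (rule sum.mono_neutral_left[OF fin]) (auto simp: V_def)
  with moments obtain c where "alternating_chain f V c (d + 2)"
    using moments_vanish_imp_alternating_chain[OF V(1,2), of f d] unfolding V_def by auto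
  then have "d + 2 \<le> card V"
    using alternating_chain_length_le V(1) unfolding alternating_chain_def by blast
  moreover have "card V \<le> card S"
    using fin V(3) by (rule card_mono)
  ultimately show False
    using card by simp
qed

section \<open>Convex combinations of points on the moment curve\<close>

lemma gamma_inj:
  assumes "d \<ge> 1"
  shows "inj (gamma d)"
proof (rule injI)
  fix s t
  assume "gamma d s = gamma d t"
  then have "gamma d s 1 = gamma d t 1"
    by simp
  then show "s = t"
    using assms by (simp add: gamma_def)
qed

definition curve_params :: "nat \<Rightarrow> (nat \<Rightarrow> real) set \<Rightarrow> real set" where
  "curve_params d \<sigma> = {t. gamma d t \<in> \<sigma>}"

lemma simplex_curve_params:
  assumes d: "d \<ge> 1" and \<sigma>: "\<sigma> \<in> simplices d"
  shows "\<sigma> = gamma d ` curve_params d \<sigma>" and "finite (curve_params d \<sigma>)"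
    and "card (curve_params d \<sigma>) \<le> Suc d"
proof -
  show \<sigma>_eq: "\<sigma> = gamma d ` curve_params d \<sigma>"
    using \<sigma> unfolding simplices_def curve_params_def by auto
  have "finite (gamma d ` curve_params d \<sigma>)" "card (gamma d ` curve_params d \<sigma>) \<le> Suc d"
    using \<sigma> \<sigma>_eq[symmetric] unfolding simplices_def by auto
  moreover have "inj_on (gamma d) (curve_params d \<sigma>)"
    using gamma_inj[OF d] by (rule inj_on_subset) simp
  ultimately show "finite (curve_params d \<sigma>)" "card (curve_params d \<sigma>) \<le> Suc d"
    by (simp_all add: finite_image_iff card_image)
qed

definition convex_weights :: "real set \<Rightarrow> (real \<Rightarrow> real) \<Rightarrow> bool" where
  "convex_weights S u \<longleftrightarrow> (\<forall>s\<in>S. 0 \<le> u s) \<and> sum u S = 1"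

definition curve_point :: "nat \<Rightarrow> real set \<Rightarrow> (real \<Rightarrow> real) \<Rightarrow> nat \<Rightarrow> real" where
  "curve_point d S u = (\<lambda>i. \<Sum>s\<in>S. u s * gamma d s i)"

lemma curve_point_apply:
  "curve_point d S u i = (if 1 \<le> i \<and> i \<le> d then \<Sum>s\<in>S. u s * s ^ i else 0)"
  unfolding curve_point_def gamma_def by auto

lemma conv_gamma_image:
  assumes "d \<ge> 1"
  shows "conv (gamma d ` S) = {curve_point d S u | u. convex_weights S u}"
proof -
  have inj: "inj_on (gamma d) S"
    using gamma_inj[OF assms] by (rule inj_on_subset) simp
  have "(\<exists>v. (\<forall>x\<in>gamma d ` S. 0 \<le> v x) \<and> (\<Sum>x\<in>gamma d ` S. v x) = 1 \<and>
            p = (\<lambda>i. \<Sum>x\<in>gamma d ` S. v x * x i)) \<longleftrightarrow>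
        (\<exists>u. convex_weights S u \<and> p = curve_point d S u)" for p
  proof
    assume "\<exists>v. (\<forall>x\<in>gamma d ` S. 0 \<le> v x) \<and> (\<Sum>x\<in>gamma d ` S. v x) = 1 \<and>
            p = (\<lambda>i. \<Sum>x\<in>gamma d ` S. v x * x i)"
    then obtain v where "\<forall>x\<in>gamma d ` S. 0 \<le> v x" "(\<Sum>x\<in>gamma d ` S. v x) = 1"
      "p = (\<lambda>i. \<Sum>x\<in>gamma d ` S. v x * x i)"
      by blast
    then show "\<exists>u. convex_weights S u \<and> p = curve_point d S u"
      by (intro exI[of _ "v \<circ> gamma d"])
        (simp add: convex_weights_def curve_point_def sum.reindex[OF inj])
  next
    assume "\<exists>u. convex_weights S u \<and> p = curve_point d S u"
    then obtain u where "convex_weights S u" "p = curve_point d S u"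
      by blast
    moreover have "inv (gamma d) (gamma d s) = s" for s
      using gamma_inj[OF assms] by simp
    ultimately show "\<exists>v. (\<forall>x\<in>gamma d ` S. 0 \<le> v x) \<and> (\<Sum>x\<in>gamma d ` S. v x) = 1 \<and>
            p = (\<lambda>i. \<Sum>x\<in>gamma d ` S. v x * x i)"
      by (intro exI[of _ "\<lambda>x. u (inv (gamma d) x)"])
        (simp add: convex_weights_def curve_point_def sum.reindex[OF inj])
  qed
  then show ?thesis
    unfolding conv_def by blast
qed

lemma lift_gamma:
  assumes "d \<ge> 1"
  shows "lift d (gamma d s) = gamma (d + 1) s"
  using gamma_inj[OF assms] unfolding lift_def by (simp add: inj_eq)

lemma curve_point_eq_iff_moments:
  assumes "convex_weights S u" and "convex_weights R w"
  shows "curve_point d S u = curve_point d R w \<longleftrightarrow>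
    (\<forall>k\<le>d. (\<Sum>s\<in>S. u s * s ^ k) = (\<Sum>s\<in>R. w s * s ^ k))"
proof
  assume eq: "curve_point d S u = curve_point d R w"
  show "\<forall>k\<le>d. (\<Sum>s\<in>S. u s * s ^ k) = (\<Sum>s\<in>R. w s * s ^ k)"
  proof (intro allI impI)
    fix k :: nat
    assume "k \<le> d"
    show "(\<Sum>s\<in>S. u s * s ^ k) = (\<Sum>s\<in>R. w s * s ^ k)"
    proof (cases "k = 0")
      case True
      then show ?thesis
        using assms by (simp add: convex_weights_def)
    next
      case False
      then show ?thesis
        using fun_cong[OF eq, of k] \<open>k \<le> d\<close> by (simp add: curve_point_apply)
    qed
  qed
qed (auto simp: curve_point_apply)

lemma convex_weights_subset:
  assumes "convex_weights R w" and "A \<subseteq> R" and "finite R" and "\<forall>y\<in>R - A. w y = 0"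
  shows "convex_weights A w" and "curve_point d A w = curve_point d R w"
proof -
  have restrict: "(\<Sum>y\<in>A. w y * f y) = (\<Sum>y\<in>R. w y * f y)" for f
    using assms(2-4) by (intro sum.mono_neutral_left) (auto intro: finite_subset)
  show "convex_weights A w"
    using assms(1,2) restrict[of "\<lambda>_. 1"] by (auto simp: convex_weights_def)
  show "curve_point d A w = curve_point d R w"
    unfolding curve_point_def by (simp add: restrict)
qed

lemma curve_point_weights_unique:
  assumes "finite S" and "card S \<le> Suc d" and "convex_weights S u" and "convex_weights S v"
    and "curve_point d S u = curve_point d S v"
  shows "\<forall>s\<in>S. u s = v s"
proof -
  have "\<forall>k\<le>d. (\<Sum>s\<in>S. (u s - v s) * s ^ k) = 0"
    using curve_point_eq_iff_moments[OF assms(3,4), of d] assms(5)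
    by (simp add: left_diff_distrib sum_subtractf)
  then show ?thesis
    using moments_vanish_imp_zero[OF assms(1,2), of "\<lambda>s. u s - v s"] by simp
qed

lemma height_curve_point:
  assumes d: "d \<ge> 1" and fin: "finite S" and card: "card S \<le> Suc d"
    and u: "convex_weights S u"
  shows "height d (gamma d ` S) (curve_point d S u) = (\<Sum>s\<in>S. u s * s ^ (d + 1))"
proof -
  have "lift d ` gamma d ` S = gamma (d + 1) ` S"
    using lift_gamma[OF d] by (simp add: image_image)
  then have conv_lift: "conv (lift d ` gamma d ` S) = {curve_point (d + 1) S v | v. convex_weights S v}"
    using conv_gamma_image[of "d + 1" S] by simp
  have proj: "proj d (curve_point (d + 1) S v) = curve_point d S v" for v
    by (rule ext) (simp add: proj_def curve_point_apply)
  have unique: "(\<Sum>s\<in>S. v s * s ^ (d + 1)) = (\<Sum>s\<in>S. u s * s ^ (d + 1))"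
    if "convex_weights S v" and "curve_point d S v = curve_point d S u" for v
    using curve_point_weights_unique[OF fin card that(1) u that(2)] by (intro sum.cong) auto
  have last: "curve_point (d + 1) S v (d + 1) = (\<Sum>s\<in>S. v s * s ^ (d + 1))" for v
    by (simp add: curve_point_apply)
  show ?thesis
    unfolding height_def conv_lift
  proof (rule the_equality)
    show "\<exists>q\<in>{curve_point (d + 1) S v | v. convex_weights S v}.
            proj d q = curve_point d S u \<and> q (d + 1) = (\<Sum>s\<in>S. u s * s ^ (d + 1))"
      using u proj last by (intro bexI[of _ "curve_point (d + 1) S u"]) auto
  next
    fix y
    assume "\<exists>q\<in>{curve_point (d + 1) S v | v. convex_weights S v}.
              proj d q = curve_point d S u \<and> q (d + 1) = y"
    then obtain v where "convex_weights S v" "proj d (curve_point (d + 1) S v) = curve_point d S u"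
      "y = curve_point (d + 1) S v (d + 1)"
      by blast
    then show "y = (\<Sum>s\<in>S. u s * s ^ (d + 1))"
      using unique[of v] unfolding proj last by simp
  qed
qed

section \<open>Overlapping simplices and moment-preserving transfers\<close>

lemma sum_if_mem_subset:
  assumes "finite B" and "A \<subseteq> B"
  shows "(\<Sum>y\<in>B. if y \<in> A then f y else 0) = sum f A"
proof -
  have "B \<inter> A = A"
    using assms(2) by blast
  then show ?thesis
    using sum.inter_restrict[OF assms(1), of f A] by simp
qed

definition moment_preserving_transfer :: "nat \<Rightarrow> real set \<Rightarrow> real set \<Rightarrow> (real \<Rightarrow> real) \<Rightarrow> bool" where
  "moment_preserving_transfer d S R \<nu> \<longleftrightarrow> (\<forall>y. 0 < \<nu> y \<longrightarrow> y \<in> R) \<and> (\<forall>y. \<nu> y < 0 \<longrightarrow> y \<in> S) \<and>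
     (\<forall>k\<le>d. (\<Sum>y\<in>S \<union> R. \<nu> y * y ^ k) = 0)"

lemma transfer_sign:
  assumes "moment_preserving_transfer d S R \<nu>" and "\<nu> y \<noteq> 0"
  shows "y \<in> S \<union> R" and "y \<notin> S \<Longrightarrow> 0 < \<nu> y" and "y \<notin> R \<Longrightarrow> \<nu> y < 0"
proof -
  have "\<nu> y < 0 \<or> 0 < \<nu> y"
    using assms(2) by linarith
  then show "y \<in> S \<union> R" "y \<notin> S \<Longrightarrow> 0 < \<nu> y" "y \<notin> R \<Longrightarrow> \<nu> y < 0"
    using assms(1) unfolding moment_preserving_transfer_def by auto
qed

lemma below_imp_transfer:
  assumes d: "d \<ge> 1" and fin: "finite S" "finite R"
    and below: "below d (gamma d ` S) (gamma d ` R)"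
  shows "\<exists>\<nu>. moment_preserving_transfer d S R \<nu> \<and> (\<exists>y. \<nu> y \<noteq> 0)"
proof -
  have "gamma d ` S \<inter> gamma d ` R = gamma d ` (S \<inter> R)"
    using gamma_inj[OF d] by (simp add: image_Int)
  then obtain p where p: "p \<in> conv (gamma d ` S)" "p \<in> conv (gamma d ` R)"
    "p \<notin> conv (gamma d ` (S \<inter> R))"
    using below unfolding below_def overlap_def by auto
  then obtain u w where u: "convex_weights S u" "p = curve_point d S u"
    and w: "convex_weights R w" "p = curve_point d R w"
    unfolding conv_gamma_image[OF d] by blast
  define \<nu> where "\<nu> y = (if y \<in> R then w y else 0) - (if y \<in> S then u y else 0)" for y
  have moment: "(\<Sum>y\<in>S \<union> R. \<nu> y * y ^ k) = (\<Sum>y\<in>R. w y * y ^ k) - (\<Sum>y\<in>S. u y * y ^ k)" for k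
    unfolding \<nu>_def left_diff_distrib sum_subtractf using fin
    by (simp add: if_distrib[of "\<lambda>x. x * _"] sum_if_mem_subset cong: if_cong)
  have same_moments: "\<forall>k\<le>d. (\<Sum>s\<in>S. u s * s ^ k) = (\<Sum>s\<in>R. w s * s ^ k)"
    using curve_point_eq_iff_moments[OF u(1) w(1), of d] u(2) w(2) by simp
  have "moment_preserving_transfer d S R \<nu>"
    unfolding moment_preserving_transfer_def
  proof (intro conjI allI impI)
    fix k :: nat
    assume "k \<le> d"
    then show "(\<Sum>y\<in>S \<union> R. \<nu> y * y ^ k) = 0"
      using same_moments by (simp add: moment)
  qed (use u(1) w(1) in \<open>auto simp: \<nu>_def convex_weights_def split: if_splits\<close>)
  moreover have "\<exists>y. \<nu> y \<noteq> 0"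
  proof (rule ccontr)
    assume "\<nexists>y. \<nu> y \<noteq> 0"
    have "w y = 0" if "y \<in> R - (S \<inter> R)" for y
    proof -
      have "\<nu> y = w y"
        using that by (auto simp: \<nu>_def)
      then show ?thesis
        using \<open>\<nexists>y. \<nu> y \<noteq> 0\<close> by simp
    qed
    then have "convex_weights (S \<inter> R) w" "curve_point d (S \<inter> R) w = curve_point d R w"
      using convex_weights_subset[OF w(1) _ fin(2), of "S \<inter> R"] by auto
    then have "p \<in> conv (gamma d ` (S \<inter> R))"
      unfolding conv_gamma_image[OF d] w(2) by (metis (mono_tags, lifting) mem_Collect_eq)
    then show False
      using p(3) by simp
  qed
  ultimately show ?thesis
    by blast
qed

lemma below_height_le:
  assumes d: "d \<ge> 1" and fin: "finite S" "finite R" and card: "card S \<le> Suc d" "card R \<le> Suc d"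
    and below: "below d (gamma d ` S) (gamma d ` R)"
    and u: "convex_weights S u" and w: "convex_weights R w"
    and same_point: "curve_point d S u = curve_point d R w"
  shows "(\<Sum>s\<in>S. u s * s ^ (d + 1)) \<le> (\<Sum>s\<in>R. w s * s ^ (d + 1))"
proof -
  have "curve_point d S u \<in> conv (gamma d ` S) \<inter> conv (gamma d ` R)"
    unfolding conv_gamma_image[OF d] using u w same_point by blast
  then have "height d (gamma d ` S) (curve_point d S u) \<le> height d (gamma d ` R) (curve_point d R w)"
    using below same_point unfolding below_def by metis
  then show ?thesis
    using height_curve_point[OF d fin(1) card(1) u] height_curve_point[OF d fin(2) card(2) w] by simp
qed

lemma transfer_decompose:
  assumes fin: "finite S" "finite R" and \<nu>: "moment_preserving_transfer d S R \<nu>"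
    and nonzero: "\<exists>y\<in>S \<union> R. \<nu> y \<noteq> 0"
  obtains W u w where "0 < W" and "convex_weights S u" and "convex_weights R w"
    and "curve_point d S u = curve_point d R w"
    and "\<And>k. (\<Sum>y\<in>S \<union> R. \<nu> y * y ^ k) = W * ((\<Sum>y\<in>R. w y * y ^ k) - (\<Sum>y\<in>S. u y * y ^ k))"
proof -
  define pos where "pos y = max (\<nu> y) 0" for y
  define neg where "neg y = max (- \<nu> y) 0" for y
  have \<nu>_eq: "\<nu> y = pos y - neg y" and nonneg: "0 \<le> pos y" "0 \<le> neg y" for y
    unfolding pos_def neg_def by auto
  have restrict_S: "(\<Sum>y\<in>S. neg y * f y) = (\<Sum>y\<in>S \<union> R. neg y * f y)" for f
    using \<nu> fin unfolding moment_preserving_transfer_def neg_def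
    by (intro sum.mono_neutral_left) (auto simp: max_def)
  have restrict_R: "(\<Sum>y\<in>R. pos y * f y) = (\<Sum>y\<in>S \<union> R. pos y * f y)" for f
    using \<nu> fin unfolding moment_preserving_transfer_def pos_def
    by (intro sum.mono_neutral_left) (auto simp: max_def)
  have moment_diff: "(\<Sum>y\<in>S \<union> R. \<nu> y * y ^ k) = (\<Sum>y\<in>R. pos y * y ^ k) - (\<Sum>y\<in>S. neg y * y ^ k)" for k
    unfolding \<nu>_eq left_diff_distrib sum_subtractf restrict_S restrict_R ..
  have balanced: "(\<Sum>y\<in>S. neg y * y ^ k) = (\<Sum>y\<in>R. pos y * y ^ k)" if "k \<le> d" for k
    using \<nu> that moment_diff[of k] unfolding moment_preserving_transfer_def by simp
  define W where "W = (\<Sum>y\<in>R. pos y)"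
  have "W \<noteq> 0"
  proof
    assume "W = 0"
    then have "(\<Sum>y\<in>S \<union> R. pos y) = 0" "(\<Sum>y\<in>S \<union> R. neg y) = 0"
      using balanced[of 0] restrict_S[of "\<lambda>_. 1"] restrict_R[of "\<lambda>_. 1"] unfolding W_def by simp_all
    then show False
      using nonzero fin nonneg by (auto simp: sum_nonneg_eq_0_iff \<nu>_eq)
  qed
  then have "0 < W"
    unfolding W_def using nonneg by (simp add: sum_nonneg order_less_le)
  define u where "u y = neg y / W" for y
  define w where "w y = pos y / W" for y
  have u_sum: "(\<Sum>y\<in>S. u y * f y) = (\<Sum>y\<in>S. neg y * f y) / W"
    and w_sum: "(\<Sum>y\<in>R. w y * f y) = (\<Sum>y\<in>R. pos y * f y) / W" for f
    unfolding u_def w_def sum_divide_distrib by (simp_all add: algebra_simps)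
  have "convex_weights S u" "convex_weights R w"
    using u_sum[of "\<lambda>_. 1"] w_sum[of "\<lambda>_. 1"] balanced[of 0] nonneg \<open>0 < W\<close>
    unfolding convex_weights_def u_def w_def W_def by auto
  moreover have "curve_point d S u = curve_point d R w"
    using curve_point_eq_iff_moments[OF calculation] u_sum w_sum balanced by simp
  moreover have "(\<Sum>y\<in>S \<union> R. \<nu> y * y ^ k) = W * ((\<Sum>y\<in>R. w y * y ^ k) - (\<Sum>y\<in>S. u y * y ^ k))" for k
    unfolding moment_diff u_sum w_sum using \<open>0 < W\<close> by (simp add: field_simps)
  ultimately show thesis
    using that \<open>0 < W\<close> by blast
qed

lemma below_transfer_lifted_moment_nonneg:
  assumes d: "d \<ge> 1" and fin: "finite S" "finite R" and card: "card S \<le> Suc d" "card R \<le> Suc d"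
    and below: "below d (gamma d ` S) (gamma d ` R)"
    and \<nu>: "moment_preserving_transfer d S R \<nu>"
  shows "0 \<le> (\<Sum>y\<in>S \<union> R. \<nu> y * y ^ (d + 1))"
proof (cases "\<exists>y\<in>S \<union> R. \<nu> y \<noteq> 0")
  case True
  obtain W u w where W: "0 < W" and uw: "convex_weights S u" "convex_weights R w"
    "curve_point d S u = curve_point d R w"
    and moments: "\<And>k. (\<Sum>y\<in>S \<union> R. \<nu> y * y ^ k) = W * ((\<Sum>y\<in>R. w y * y ^ k) - (\<Sum>y\<in>S. u y * y ^ k))"
    using transfer_decompose[OF fin \<nu> True] by blast
  have "(\<Sum>y\<in>S. u y * y ^ (d + 1)) \<le> (\<Sum>y\<in>R. w y * y ^ (d + 1))"
    using below_height_le[OF d fin card below uw] .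
  then show ?thesis
    unfolding moments using W by simp
qed simp

definition alternating_circuit :: "real set \<Rightarrow> real set \<Rightarrow> real set \<Rightarrow> bool" where
  "alternating_circuit S R Z \<longleftrightarrow> Z \<subseteq> S \<union> R \<and>
     (\<forall>z\<in>Z. if even (card {w\<in>Z. z < w}) then z \<in> S else z \<in> R)"

lemma below_imp_no_alternating_circuit:
  assumes d: "d \<ge> 1" and fin: "finite S" "finite R" and card: "card S \<le> Suc d" "card R \<le> Suc d"
    and below: "below d (gamma d ` S) (gamma d ` R)"
    and Z: "alternating_circuit S R Z" "card Z = d + 2"
  shows False
proof -
  have "finite Z"
    using Z(2) card.infinite by fastforce
  define \<nu> where "\<nu> z = (if z \<in> Z then - circuit_weight Z z else 0)" for z
  have sign: "0 < circuit_weight Z z \<longleftrightarrow> even (card {w\<in>Z. z < w})"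
    and nonzero: "circuit_weight Z z \<noteq> 0" if "z \<in> Z" for z
    using circuit_weight_sign[OF \<open>finite Z\<close> that]
    by (cases "even (card {w\<in>Z. z < w})"; auto simp: zero_less_mult_iff)+
  have moment: "(\<Sum>y\<in>S \<union> R. \<nu> y * y ^ k) = - (\<Sum>z\<in>Z. circuit_weight Z z * z ^ k)" for k
    unfolding \<nu>_def using fin Z(1)
    by (simp add: if_distrib[of "\<lambda>x. x * _"] sum_if_mem_subset sum_negf alternating_circuit_def
        cong: if_cong)
  have "moment_preserving_transfer d S R \<nu>"
    unfolding moment_preserving_transfer_def
  proof (intro conjI allI impI)
    fix y
    assume "0 < \<nu> y"
    then show "y \<in> R"
      using Z(1) sign[of y] unfolding \<nu>_def alternating_circuit_def by (auto split: if_splits)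
  next
    fix y
    assume "\<nu> y < 0"
    then show "y \<in> S"
      using Z(1) sign[of y] unfolding \<nu>_def alternating_circuit_def by (auto split: if_splits)
  next
    fix k :: nat
    assume "k \<le> d"
    then show "(\<Sum>y\<in>S \<union> R. \<nu> y * y ^ k) = 0"
      using circuit_weight_moment[OF \<open>finite Z\<close>, of "d + 1" k] Z(2) by (simp add: moment)
  qed
  then have "0 \<le> (\<Sum>y\<in>S \<union> R. \<nu> y * y ^ (d + 1))"
    by (rule below_transfer_lifted_moment_nonneg[OF d fin card below])
  moreover have "(\<Sum>z\<in>Z. circuit_weight Z z * z ^ (d + 1)) = 1"
    using circuit_weight_moment[OF \<open>finite Z\<close>, of "d + 1" "d + 1"] Z(2) by simp
  ultimately show False
    unfolding moment by simp
qed

lemma card_Un_decreasing_seq: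
  fixes M :: "nat \<Rightarrow> real"
  assumes "finite T" and below: "\<forall>y\<in>T. \<forall>i<m. M i < y"
    and decreasing: "\<forall>i j. i < j \<longrightarrow> j < m \<longrightarrow> M j < M i" and "i \<le> m"
  shows "card (T \<union> M ` {..<i}) = card T + i"
proof -
  have "inj_on M {..<i}"
    by (rule linorder_inj_onI') (use decreasing \<open>i \<le> m\<close> in \<open>fastforce\<close>)
  moreover have "M i' \<notin> T" if "i' < i" for i'
  proof
    assume "M i' \<in> T"
    then show False
      using bspec[OF below \<open>M i' \<in> T\<close>] that \<open>i \<le> m\<close> by (auto dest: spec[of _ i'])
  qed
  then have "T \<inter> M ` {..<i} = {}"
    by blast
  ultimately show ?thesis
    using \<open>finite T\<close> by (simp add: card_Un_disjoint card_image)
qed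

lemma greater_in_Un_decreasing_seq:
  fixes M :: "nat \<Rightarrow> real"
  assumes below: "\<forall>y\<in>T. \<forall>i<m. M i < y"
    and decreasing: "\<forall>i j. i < j \<longrightarrow> j < m \<longrightarrow> M j < M i" and "i < m"
  shows "{w \<in> T \<union> M ` {..<m}. M i < w} = T \<union> M ` {..<i}"
proof -
  have "M i < M i' \<longleftrightarrow> i' < i" if "i' < m" for i'
    using decreasing \<open>i < m\<close> that by (cases i i' rule: linorder_cases) (auto dest: order.asym)
  then show ?thesis
    using below \<open>i < m\<close> by auto
qed

lemma alternating_circuit_Un_decreasing_seq:
  fixes M :: "nat \<Rightarrow> real"
  assumes T: "finite T" "T \<subseteq> S \<inter> R" and below: "\<forall>y\<in>T. \<forall>i<m. M i < y"
    and decreasing: "\<forall>i j. i < j \<longrightarrow> j < m \<longrightarrow> M j < M i"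
    and side: "\<forall>i<m. if even (card T + i) then M i \<in> S else M i \<in> R"
  shows "alternating_circuit S R (T \<union> M ` {..<m})" and "card (T \<union> M ` {..<m}) = card T + m"
proof -
  show "card (T \<union> M ` {..<m}) = card T + m"
    using card_Un_decreasing_seq[OF T(1) below decreasing] by simp
  have "card {w \<in> T \<union> M ` {..<m}. M i < w} = card T + i" if "i < m" for i
    unfolding greater_in_Un_decreasing_seq[OF below decreasing that]
    using card_Un_decreasing_seq[OF T(1) below decreasing] that by simp
  then show "alternating_circuit S R (T \<union> M ` {..<m})"
    using T(2) side unfolding alternating_circuit_def by (auto split: if_splits)
qed

lemma transfer_support_alternating_chain:
  assumes fin: "finite S" "finite R"
    and \<nu>: "moment_preserving_transfer d S R \<nu>" "\<exists>y. \<nu> y \<noteq> 0"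
  shows "\<exists>c. alternating_chain \<nu> {y\<in>S \<union> R. \<nu> y \<noteq> 0} c (d + 2)"
proof -
  define V where "V = {y\<in>S \<union> R. \<nu> y \<noteq> 0}"
  have V: "finite V" "V \<noteq> {}" "\<forall>y\<in>V. \<nu> y \<noteq> 0"
    using fin \<nu>(2) transfer_sign(1)[OF \<nu>(1)] unfolding V_def by auto
  have "(\<Sum>y\<in>V. \<nu> y * y ^ k) = (\<Sum>y\<in>S \<union> R. \<nu> y * y ^ k)" for k
    using fin by (intro sum.mono_neutral_left) (auto simp: V_def)
  then show ?thesis
    using moments_vanish_imp_alternating_chain[OF V, of d] \<nu>(1)
    unfolding moment_preserving_transfer_def V_def by auto
qed

lemma transfer_alternating_circuit:
  assumes fin: "finite S" "finite R"
    and \<nu>: "moment_preserving_transfer d S R \<nu>" "\<exists>y. \<nu> y \<noteq> 0"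
    and x: "x \<in> S \<union> R" "x \<notin> S \<inter> R" and agree: "\<forall>y>x. y \<in> S \<longleftrightarrow> y \<in> R"
    and t: "card {y\<in>S. x < y} \<le> d"
    and parity: "x \<in> R \<longleftrightarrow> odd (card {y\<in>S. x < y})"
  shows "\<exists>Z. alternating_circuit S R Z \<and> card Z = d + 2"
proof -
  define T where "T = {y\<in>S. x < y}"
  define t where "t = card T"
  have T: "finite T" "T \<subseteq> S \<inter> R" "\<forall>y\<in>T. x < y"
    using fin agree unfolding T_def by auto
  define V where "V = {y\<in>S \<union> R. \<nu> y \<noteq> 0}"
  obtain c where chain: "alternating_chain \<nu> V c (d + 2)"
    using transfer_support_alternating_chain[OF fin \<nu>] unfolding V_def by blast
  \<comment> \<open>the sign of \<open>\<nu>\<close> just below \<open>x\<close> that continues the alternation through \<open>x\<close>\<close>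
  define e :: real where "e = - ((-1) ^ t)"
  have e: "e \<noteq> 0" "x \<in> V \<Longrightarrow> 0 < \<nu> x * e"
    using x parity transfer_sign(2,3)[OF \<nu>(1), of x]
    unfolding e_def t_def T_def V_def by (auto simp: zero_less_mult_iff)
  define n where "n = d + 2 - t - 1"
  have "\<forall>y\<in>V. x < y \<longrightarrow> y \<in> T"
    using agree unfolding V_def T_def by auto
  then obtain L where L: "alternating_chain \<nu> {y\<in>V. y < x} L n" "\<nu> (L 0) * e < 0"
    using alternating_chain_below[OF chain T(1) _ _ e] t unfolding n_def t_def T_def by auto
  have L_below: "L i < x" "\<nu> (L i) \<noteq> 0" if "i < n" for i
    using L(1) that unfolding alternating_chain_def V_def by auto
  have L_side: "if even (t + Suc i) then L i \<in> S else L i \<in> R" if "i < n" for i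
  proof -
    have "(-1) ^ i * \<nu> (L i) * e < 0"
      by (rule alternating_chain_sign[OF L(1) that L(2)])
    then have "0 < (-1) ^ (t + i) * \<nu> (L i)"
      unfolding e_def power_add by (simp add: mult_ac)
    then have "if even (t + i) then 0 < \<nu> (L i) else \<nu> (L i) < 0"
      by (cases "even (t + i)") simp_all
    then show ?thesis
      using \<nu>(1) unfolding moment_preserving_transfer_def by (cases "even (t + i)") auto
  qed
  define M where "M i = (if i = 0 then x else L (i - 1))" for i
  have "\<forall>y\<in>T. \<forall>i<Suc n. M i < y"
  proof (intro ballI allI impI)
    fix y i
    assume "y \<in> T" "i < Suc n"
    then show "M i < y"
      using bspec[OF T(3) \<open>y \<in> T\<close>] L_below(1)[of "i - 1"] by (cases i) (auto simp: M_def)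
  qed
  moreover have "\<forall>i j. i < j \<longrightarrow> j < Suc n \<longrightarrow> M j < M i"
    using L_below(1) alternating_chain_decreasing[OF L(1)]
    by (auto simp: M_def less_Suc_eq_0_disj)
  moreover have "\<forall>i<Suc n. if even (t + i) then M i \<in> S else M i \<in> R"
    using x parity L_side unfolding t_def T_def by (auto simp: M_def less_Suc_eq_0_disj)
  ultimately have "alternating_circuit S R (T \<union> M ` {..<Suc n})"
    and "card (T \<union> M ` {..<Suc n}) = t + Suc n"
    using alternating_circuit_Un_decreasing_seq[OF T(1,2)] unfolding t_def by blast+
  moreover have "t + Suc n = d + 2"
    using t unfolding n_def t_def T_def by simp
  ultimately show ?thesis
    by auto
qed

section \<open>The lexicographic sign vector\<close>

definition sign_vector :: "real set \<Rightarrow> real \<Rightarrow> int" where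
  "sign_vector S x = (if x \<in> S then (-1) ^ card {y\<in>S. x < y} else 0)"

definition lex_less :: "(real \<Rightarrow> int) \<Rightarrow> (real \<Rightarrow> int) \<Rightarrow> bool" where
  "lex_less f g \<longleftrightarrow> (\<exists>a. f a < g a \<and> (\<forall>x>a. f x = g x))"

lemma lex_less_irrefl: "\<not> lex_less f f"
  unfolding lex_less_def by auto

lemma lex_less_trans:
  assumes "lex_less f g" and "lex_less g h"
  shows "lex_less f h"
proof -
  obtain a b where a: "f a < g a" "\<forall>x>a. f x = g x" and b: "g b < h b" "\<forall>x>b. g x = h x"
    using assms unfolding lex_less_def by blast
  consider "a < b" | "a = b" | "b < a"
    by fastforce
  then show ?thesis
  proof cases
    case 1
    then have "f b < h b" "\<forall>x>b. f x = h x"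
      using a b by auto
    then show ?thesis
      unfolding lex_less_def by blast
  next
    case 2
    then have "f b < h b" "\<forall>x>b. f x = h x"
      using a b by auto
    then show ?thesis
      unfolding lex_less_def by blast
  next
    case 3
    then have "f a < h a" "\<forall>x>a. f x = h x"
      using a b by auto
    then show ?thesis
      unfolding lex_less_def by blast
  qed
qed

lemma lex_less_sign_vector:
  assumes x: "x \<in> S \<union> R" "x \<notin> S \<inter> R" and agree: "\<forall>y>x. y \<in> S \<longleftrightarrow> y \<in> R"
    and parity: "x \<in> R \<longleftrightarrow> even (card {y\<in>S. x < y})"
  shows "lex_less (sign_vector S) (sign_vector R)"
proof -
  have above: "{y\<in>S. z < y} = {y\<in>R. z < y}" if "x \<le> z" for z
    using agree that by auto
  have "sign_vector S z = sign_vector R z" if "x < z" for z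
    using above[of z] agree that unfolding sign_vector_def by simp
  moreover have "sign_vector S x < sign_vector R x"
  proof (cases "x \<in> R")
    case True
    then show ?thesis
      using x parity above[of x] unfolding sign_vector_def by simp
  next
    case False
    then have "x \<in> S" "odd (card {y\<in>S. x < y})"
      using x parity by auto
    then show ?thesis
      using False unfolding sign_vector_def by simp
  qed
  ultimately show ?thesis
    unfolding lex_less_def by blast
qed

lemma transfer_nonzero_imp_neq:
  assumes "finite S" and "card S \<le> Suc d"
    and \<nu>: "moment_preserving_transfer d S R \<nu>" "\<nu> y \<noteq> 0"
  shows "S \<noteq> R"
proof
  assume "S = R"
  then have "\<forall>k\<le>d. (\<Sum>y\<in>S. \<nu> y * y ^ k) = 0"
    using \<nu>(1) unfolding moment_preserving_transfer_def by simp
  then have "\<forall>y\<in>S. \<nu> y = 0"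
    by (rule moments_vanish_imp_zero[OF assms(1,2)])
  then show False
    using transfer_sign(1)[OF \<nu>] \<nu>(2) \<open>S = R\<close> by simp
qed

lemma greatest_difference:
  fixes S R :: "'a::linorder set"
  assumes "finite S" and "finite R" and "S \<noteq> R"
  obtains x where "x \<in> S \<union> R" and "x \<notin> S \<inter> R" and "\<forall>y>x. y \<in> S \<longleftrightarrow> y \<in> R"
proof -
  define D where "D = (S \<union> R) - (S \<inter> R)"
  have "finite D" "D \<noteq> {}"
    using assms unfolding D_def by auto
  moreover have "y \<in> S \<longleftrightarrow> y \<in> R" if "Max D < y" for y
    using Max_ge[OF \<open>finite D\<close>, of y] that unfolding D_def by (auto simp: not_le[symmetric])
  ultimately show thesis
    using that Max_in[OF \<open>finite D\<close> \<open>D \<noteq> {}\<close>] unfolding D_def by blast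
qed

lemma transfer_imp_lex_less:
  assumes fin: "finite S" "finite R" and card: "card S \<le> Suc d" "card R \<le> Suc d"
    and \<nu>: "moment_preserving_transfer d S R \<nu>" "\<exists>y. \<nu> y \<noteq> 0"
    and no_circuit: "\<nexists>Z. alternating_circuit S R Z \<and> card Z = d + 2"
  shows "lex_less (sign_vector S) (sign_vector R)"
proof -
  have "S \<noteq> R"
    using transfer_nonzero_imp_neq[OF fin(1) card(1) \<nu>(1)] \<nu>(2) by blast
  then obtain x where x: "x \<in> S \<union> R" "x \<notin> S \<inter> R" and agree: "\<forall>y>x. y \<in> S \<longleftrightarrow> y \<in> R"
    using greatest_difference[OF fin] by blast
  have "{y\<in>S. x < y} \<subseteq> S \<inter> R"
    using agree by blast
  then obtain A where A: "A = S \<or> A = R" "insert x {y\<in>S. x < y} \<subseteq> A"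
    using x(1) by blast
  then have "card (insert x {y\<in>S. x < y}) \<le> card A"
    using fin by (intro card_mono) auto
  also have "\<dots> \<le> Suc d"
    using A(1) card by blast
  finally have "card {y\<in>S. x < y} \<le> d"
    using fin by simp
  then have "x \<in> R \<longleftrightarrow> even (card {y\<in>S. x < y})"
    using transfer_alternating_circuit[OF fin \<nu> x agree] no_circuit by auto
  then show ?thesis
    by (rule lex_less_sign_vector[OF x agree])
qed

lemma below_imp_lex_less:
  assumes d: "d \<ge> 1" and \<sigma>: "\<sigma> \<in> simplices d" and \<tau>: "\<tau> \<in> simplices d"
    and below: "below d \<sigma> \<tau>"
  shows "lex_less (sign_vector (curve_params d \<sigma>)) (sign_vector (curve_params d \<tau>))"
proof -
  note S = simplex_curve_params[OF d \<sigma>] and R = simplex_curve_params[OF d \<tau>]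
  have below': "below d (gamma d ` curve_params d \<sigma>) (gamma d ` curve_params d \<tau>)"
    using below S(1) R(1) by simp
  obtain \<nu> where "moment_preserving_transfer d (curve_params d \<sigma>) (curve_params d \<tau>) \<nu>"
    "\<exists>y. \<nu> y \<noteq> 0"
    using below_imp_transfer[OF d S(2) R(2) below'] by blast
  then show ?thesis
    using transfer_imp_lex_less[OF S(2) R(2) S(3) R(3)]
      below_imp_no_alternating_circuit[OF d S(2) R(2) S(3) R(3) below'] by blast
qed

lemma below_chain_imp_lex_less:
  assumes d: "d \<ge> 1"
    and "(\<lambda>\<sigma> \<tau>. \<sigma> \<in> simplices d \<and> \<tau> \<in> simplices d \<and> below d \<sigma> \<tau>)\<^sup>+\<^sup>+ \<sigma> \<tau>"
  shows "lex_less (sign_vector (curve_params d \<sigma>)) (sign_vector (curve_params d \<tau>))"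
  using assms(2)
proof (induction rule: tranclp_induct)
  case (base \<tau>)
  then show ?case
    using below_imp_lex_less[OF d] by blast
next
  case (step \<tau> \<rho>)
  then show ?case
    using below_imp_lex_less[OF d] lex_less_trans by blast
qed

lemma preceq_antisym:
  assumes d: "d \<ge> 1" and "preceq d \<sigma> \<tau>" and "preceq d \<tau> \<sigma>"
  shows "\<sigma> = \<tau>"
proof (rule ccontr)
  assume "\<sigma> \<noteq> \<tau>"
  then have "(\<lambda>\<sigma> \<tau>. \<sigma> \<in> simplices d \<and> \<tau> \<in> simplices d \<and> below d \<sigma> \<tau>)\<^sup>+\<^sup>+ \<sigma> \<tau>"
    and "(\<lambda>\<sigma> \<tau>. \<sigma> \<in> simplices d \<and> \<tau> \<in> simplices d \<and> below d \<sigma> \<tau>)\<^sup>+\<^sup>+ \<tau> \<sigma>"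
    using assms(2,3) unfolding preceq_def by auto
  then have "(\<lambda>\<sigma> \<tau>. \<sigma> \<in> simplices d \<and> \<tau> \<in> simplices d \<and> below d \<sigma> \<tau>)\<^sup>+\<^sup>+ \<sigma> \<sigma>"
    by (rule tranclp_trans)
  then show False
    using below_chain_imp_lex_less[OF d] lex_less_irrefl by blast
qed

theorem lemma2p7:
  fixes d :: nat
  assumes "d \<ge> 1"
  shows "partial_order_on (simplices d)
           {(\<sigma>, \<tau>). \<sigma> \<in> simplices d \<and> \<tau> \<in> simplices d \<and> preceq d \<sigma> \<tau>}"
  unfolding partial_order_on_def preorder_on_def
proof (intro conjI)
  show "refl_on (simplices d) {(\<sigma>, \<tau>). \<sigma> \<in> simplices d \<and> \<tau> \<in> simplices d \<and> preceq d \<sigma> \<tau>}"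
    by (rule refl_onI) (auto simp: preceq_def)
  show "trans {(\<sigma>, \<tau>). \<sigma> \<in> simplices d \<and> \<tau> \<in> simplices d \<and> preceq d \<sigma> \<tau>}"
    by (rule transI) (auto simp: preceq_def intro: tranclp_trans)
  show "antisym {(\<sigma>, \<tau>). \<sigma> \<in> simplices d \<and> \<tau> \<in> simplices d \<and> preceq d \<sigma> \<tau>}"
  proof (rule antisymI)
    fix \<sigma> \<tau>
    assume "(\<sigma>, \<tau>) \<in> {(\<sigma>, \<tau>). \<sigma> \<in> simplices d \<and> \<tau> \<in> simplices d \<and> preceq d \<sigma> \<tau>}"
      and "(\<tau>, \<sigma>) \<in> {(\<sigma>, \<tau>). \<sigma> \<in> simplices d \<and> \<tau> \<in> simplices d \<and> preceq d \<sigma> \<tau>}"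
    then show "\<sigma> = \<tau>"
      using preceq_antisym[OF assms] by blast
  qed
  show "{(\<sigma>, \<tau>). \<sigma> \<in> simplices d \<and> \<tau> \<in> simplices d \<and> preceq d \<sigma> \<tau>}
      \<subseteq> simplices d \<times> simplices d"
    by auto
qed

end
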